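(* Let $d \geq 2$. For all $n \geq 0$ and all $i,j \in [0,d-1]$, $$a_{j,d}(a_{i,d}(n)) = d\,a_{i,d}(n) + \overline{(j-i)}_d = \begin{cases} d\,a_{i,d}(n) + j - i & \text{if } j \geq i,\\ d\,a_{i,d}(n) + d + j - i & \text{if } j < i.\end{cases}$$
   Context: Let $d \geq 2$ be an integer. For an integer $x$, $\overline{(x)}_d$ denotes the unique integer in $[0,d-1]$ congruent to $x$ modulo $d$. For $n \geq 0$, $s_d(n)$ denotes the sum of the base-$d$ digits of $n$. For $j \in [0,d-1]$, $(a_{j,d}(n))_{n\geq 0}$ is the strictly increasing enumeration (indexed from $n=0$) of all nonnegative integers $k$ with $s_d(k) \equiv j \pmod d$. *)

theory Defs
  imports Main "HOL-Library.Infinite_Set"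
begin

fun digit_sum :: "nat \<Rightarrow> nat \<Rightarrow> nat" where
  "digit_sum d n = (if d < 2 \<or> n = 0 then 0 else n mod d + digit_sum d (n div d))"

text \<open>a_{j,d}(n): the n-th (from 0) element, in increasing order, of the set of
  nonnegative integers k with s_d(k) congruent to j mod d.\<close>
definition a_seq :: "nat \<Rightarrow> nat \<Rightarrow> nat \<Rightarrow> nat" where
  "a_seq j d n = enumerate {k. digit_sum d k mod d = j mod d} n"

end

theory Submission
  imports Defs
begin

(*
  Every k splits as k = d * m + r with a last digit r < d, and s_d(d * m + r) = r + s_d(m).
  Hence among the d numbers d * m, ..., d * m + (d - 1) exactly one has digit sum congruent
  to j modulo d, namely d * m + c, where c is the residue of j - s_d(m) modulo d (the
  "completing digit").  So the set enumerated by a_{j,d} is the range of the strictly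
  increasing map m \<mapsto> d * m + c, and since the enumeration of the range of a strictly
  increasing map is that map itself, a_{j,d}(m) = d * m + ((j - s_d(m)) mod d).

  The theorem follows by taking m = a_{i,d}(n),
  whose digit sum is congruent to i, so that the completing digit becomes (j - i) mod d.
*)

lemma enumerate_range_strict_mono:
  fixes f :: "nat \<Rightarrow> nat"
  assumes mono: "strict_mono f"
  shows "enumerate (range f) n = f n"
proof (induction n)
  case 0
  show ?case unfolding enumerate_0
  proof (rule Least_equality)
    show "f 0 \<in> range f" by simp
  next
    fix y assume "y \<in> range f"
    then show "f 0 \<le> y" using strict_mono_less_eq[OF mono] by auto
  qed
next
  case (Suc n)
  have inf: "infinite (range f)"
    using range_inj_infinite[OF strict_mono_imp_inj_on[OF mono]] .
  show ?case unfolding enumerate_Suc''[OF inf] Suc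
  proof (rule Least_equality)
    show "f (Suc n) \<in> range f \<and> f n < f (Suc n)"
      using strict_mono_less[OF mono] by simp
  next
    fix y assume "y \<in> range f \<and> f n < y"
    then obtain m where y: "y = f m" and "f n < f m" by blast
    then have "Suc n \<le> m" using strict_mono_less[OF mono] by (simp add: Suc_le_eq)
    then show "f (Suc n) \<le> y" unfolding y using strict_mono_less_eq[OF mono] by blast
  qed
qed

text \<open>The defining equation of the digit sum unfolds forever when used as a rewrite rule,
  so it is only applied explicitly.\<close>

declare digit_sum.simps [simp del]

lemma digit_sum_0 [simp]: "digit_sum d 0 = 0"
  by (subst digit_sum.simps) simp

lemma digit_sum_append_digit:
  assumes d: "d \<ge> 2" and r: "r < d"
  shows "digit_sum d (d * m + r) = r + digit_sum d m"
proof (cases "d * m + r = 0")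
  case True
  then show ?thesis using d by simp
next
  case False
  have "(d * m + r) mod d = r" and "(d * m + r) div d = m" using d r by auto
  with False d show ?thesis by (subst digit_sum.simps) simp
qed

text \<open>The unique last digit making the digit sum of d * m + c congruent to j modulo d.\<close>

definition completing_digit :: "nat \<Rightarrow> nat \<Rightarrow> nat \<Rightarrow> nat" where
  "completing_digit d j m = nat ((int j - int (digit_sum d m)) mod int d)"

definition digit_extension :: "nat \<Rightarrow> nat \<Rightarrow> nat \<Rightarrow> nat" where
  "digit_extension d j m = d * m + completing_digit d j m"

lemma completing_digit_less: "d \<ge> 2 \<Longrightarrow> completing_digit d j m < d"
  unfolding completing_digit_def by (simp add: nat_less_iff)

lemma int_completing_digit:
  "d \<ge> 2 \<Longrightarrow> int (completing_digit d j m) = (int j - int (digit_sum d m)) mod int d"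
  unfolding completing_digit_def by simp

lemma completing_digit_iff:
  assumes d: "d \<ge> 2" and r: "r < d"
  shows "digit_sum d (d * m + r) mod d = j mod d \<longleftrightarrow> r = completing_digit d j m"
proof -
  let ?s = "int (digit_sum d m)"
  have "digit_sum d (d * m + r) mod d = j mod d \<longleftrightarrow> (r + digit_sum d m) mod d = j mod d"
    by (simp only: digit_sum_append_digit[OF d r])
  also have "\<dots> \<longleftrightarrow> (int r + ?s) mod int d = int j mod int d"
    by (simp flip: of_nat_mod of_nat_add)
  also have "\<dots> \<longleftrightarrow> int r mod int d = (int j - ?s) mod int d"
    by (metis add_diff_cancel_right' diff_add_cancel mod_diff_left_eq mod_add_left_eq)
  also have "int r mod int d = int r" using r by simp
  also have "int r = (int j - ?s) mod int d \<longleftrightarrow> r = completing_digit d j m"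
    unfolding int_completing_digit[OF d, symmetric] by simp
  finally show ?thesis .
qed

lemma digit_class_eq_range:
  assumes d: "d \<ge> 2"
  shows "{k. digit_sum d k mod d = j mod d} = range (digit_extension d j)"
proof (intro set_eqI iffI)
  fix k assume "k \<in> {k. digit_sum d k mod d = j mod d}"
  then have "digit_sum d (d * (k div d) + k mod d) mod d = j mod d" by simp
  moreover have "k mod d < d" using d by simp
  ultimately have last_digit: "k mod d = completing_digit d j (k div d)"
    using completing_digit_iff[OF d] by blast
  have "k = d * (k div d) + k mod d" by simp
  also have "\<dots> = digit_extension d j (k div d)"
    unfolding digit_extension_def last_digit ..
  finally show "k \<in> range (digit_extension d j)" by (rule range_eqI)
next
  fix k assume "k \<in> range (digit_extension d j)"
  then obtain m where "k = d * m + completing_digit d j m"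
    unfolding digit_extension_def by blast
  then show "k \<in> {k. digit_sum d k mod d = j mod d}"
    using completing_digit_iff[OF d completing_digit_less[OF d]] by simp
qed

text \<open>Blocks of d consecutive numbers are disjoint, so the digit extension is increasing.\<close>

lemma strict_mono_digit_extension:
  assumes d: "d \<ge> 2"
  shows "strict_mono (digit_extension d j)"
  unfolding strict_mono_Suc_iff
proof
  fix m
  have "digit_extension d j m < d * Suc m"
    using completing_digit_less[OF d] unfolding digit_extension_def by simp
  also have "\<dots> \<le> digit_extension d j (Suc m)"
    unfolding digit_extension_def by simp
  finally show "digit_extension d j m < digit_extension d j (Suc m)" .
qed

lemma a_seq_eq_digit_extension:
  assumes d: "d \<ge> 2"
  shows "a_seq j d m = digit_extension d j m"
  unfolding a_seq_def digit_class_eq_range[OF d]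
  using enumerate_range_strict_mono[OF strict_mono_digit_extension[OF d]] .

lemma digit_sum_a_seq:
  assumes d: "d \<ge> 2"
  shows "digit_sum d (a_seq j d m) mod d = j mod d"
  using digit_class_eq_range[OF d, of j] a_seq_eq_digit_extension[OF d] by blast

lemma residue_of_digit_difference:
  fixes d i j :: nat
  assumes "i < d" and "j < d"
  shows "(int j - int i) mod int d = (if j \<ge> i then int j - int i else int d + int j - int i)"
proof (cases "j \<ge> i")
  case True
  then show ?thesis using assms by simp
next
  case False
  have "(int j - int i) mod int d = (int d + int j - int i) mod int d"
    by (metis add_diff_eq mod_add_self1)
  also have "\<dots> = int d + int j - int i"
    using False assms by (intro mod_pos_pos_trivial) auto
  finally show ?thesis using False by simp
qed

theorem theorem1:
  fixes d n i j :: nat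
  assumes "d \<ge> 2" and "i < d" and "j < d"
  shows "int (a_seq j d (a_seq i d n)) = int d * int (a_seq i d n) + (int j - int i) mod int d
       \<and> (int (a_seq j d (a_seq i d n)) =
            (if j \<ge> i then int d * int (a_seq i d n) + int j - int i
             else int d * int (a_seq i d n) + int d + int j - int i))"
proof -
  let ?m = "a_seq i d n"
  have "int (digit_sum d ?m) mod int d = int i"
    using digit_sum_a_seq[OF assms(1), of i n] assms(2) by (simp flip: of_nat_mod)
  then have digit: "(int j - int (digit_sum d ?m)) mod int d = (int j - int i) mod int d"
    by (metis mod_diff_right_eq)
  have formula: "int (a_seq j d ?m) = int d * int ?m + (int j - int i) mod int d"
    using a_seq_eq_digit_extension[OF assms(1)] int_completing_digit[OF assms(1)] digit
    by (simp add: digit_extension_def)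
  then show ?thesis
    using residue_of_digit_difference[OF assms(2,3)] by simp
qed

end
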